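(* For every positive integer $t$ and every finite graph $G$ of degeneracy at most $t$, the hypergraph of closed neighborhoods in $G$ has a sample compression scheme of size $t+\lceil\log_2(t+1)\rceil+1$.
   Context: $G$ has degeneracy at most $t$ if there is a total order $\prec$ on $V(G)$ such that every vertex $v$ has at most $t$ neighbors $u$ with $u\prec v$. The hypergraph of closed neighborhoods in $G$ has vertex set $V(G)$ and hyperedges $B_G(c,1)=\{c\}\cup N_G(c)$ for $c\in V(G)$. For a hypergraph $H$ (finite $V(H)$, $E(H)\subseteq 2^{V(H)}$): a sample is a pair $(X^+,X^-)$ of subsets of $V(H)$ such that some hyperedge $e$ has $X^+\subseteq e$, $X^-\cap e=\emptyset$; $\mathcal{S}(H)$ is the set of samples; $S$ realizes $(X^+,X^-)$ if $X^+\subseteq S$, $S\cap X^-=\emptyset$; a subsample is a sample $(Y^+,Y^-)$ with $Y^\pm\subseteq X^\pm$, of size $|Y^+\cup Y^-|$. A sample compression scheme is $(\kappa,\rho)$ with $\kappa:\mathcal{S}(H)\to\mathcal{S}(H)\times\{0,1\}^*$ and $\rho:\mathcal{S}(H)\times\{0,1\}^*\to 2^{V(H)}$ such that for every sample the first component of $\kappa(X^+,X^-)$ is a subsample of it and $\rho(\kappa(X^+,X^-))$ realizes it; its size is $k_1+k_2$, $k_1$ the maximum subsample size and $k_2$ the maximum bitstring length output by $\kappa$. *)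

theory Defs
  imports Complex_Main
begin

definition finite_graph :: "'a set \<Rightarrow> ('a \<Rightarrow> 'a \<Rightarrow> bool) \<Rightarrow> bool" where
  "finite_graph V E \<longleftrightarrow> finite V \<and> (\<forall>u v. E u v \<longrightarrow> u \<in> V \<and> v \<in> V)
     \<and> (\<forall>u v. E u v \<longrightarrow> E v u) \<and> (\<forall>v. \<not> E v v)"

definition degeneracy_le :: "'a set \<Rightarrow> ('a \<Rightarrow> 'a \<Rightarrow> bool) \<Rightarrow> nat \<Rightarrow> bool" where
  "degeneracy_le V E t \<longleftrightarrow> (\<exists>r. strict_linear_order_on V r \<and>
     (\<forall>v\<in>V. card {u \<in> V. E u v \<and> (u, v) \<in> r} \<le> t))"

definition closed_nbhd :: "'a set \<Rightarrow> ('a \<Rightarrow> 'a \<Rightarrow> bool) \<Rightarrow> 'a \<Rightarrow> 'a set" where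
  "closed_nbhd V E c = insert c {u \<in> V. E c u}"

definition closed_nbhd_edges :: "'a set \<Rightarrow> ('a \<Rightarrow> 'a \<Rightarrow> bool) \<Rightarrow> 'a set set" where
  "closed_nbhd_edges V E = closed_nbhd V E ` V"

definition samples :: "'a set \<Rightarrow> 'a set set \<Rightarrow> ('a set \<times> 'a set) set" where
  "samples HV HE = {(Xp, Xm). Xp \<subseteq> HV \<and> Xm \<subseteq> HV \<and>
     (\<exists>e\<in>HE. Xp \<subseteq> e \<and> Xm \<inter> e = {})}"

definition realizes :: "'a set \<Rightarrow> 'a set \<times> 'a set \<Rightarrow> bool" where
  "realizes S X \<longleftrightarrow> fst X \<subseteq> S \<and> S \<inter> snd X = {}"

definition is_subsample :: "'a set \<Rightarrow> 'a set set \<Rightarrow> 'a set \<times> 'a set \<Rightarrow> 'a set \<times> 'a set \<Rightarrow> bool" where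
  "is_subsample HV HE Y X \<longleftrightarrow> Y \<in> samples HV HE \<and> fst Y \<subseteq> fst X \<and> snd Y \<subseteq> snd X"

definition is_compression_scheme ::
  "'a set \<Rightarrow> 'a set set \<Rightarrow> ('a set \<times> 'a set \<Rightarrow> ('a set \<times> 'a set) \<times> bool list)
   \<Rightarrow> (('a set \<times> 'a set) \<times> bool list \<Rightarrow> 'a set) \<Rightarrow> bool" where
  "is_compression_scheme HV HE kappa rho \<longleftrightarrow>
     (\<forall>Y\<in>samples HV HE. \<forall>b. rho (Y, b) \<subseteq> HV) \<and>
     (\<forall>X\<in>samples HV HE. is_subsample HV HE (fst (kappa X)) X \<and> realizes (rho (kappa X)) X)"

text \<open>Size k1 + k2: k1 = max subsample size, k2 = max bitstring length.
  A scheme "of size s" is one whose size is at most s (bitstrings can be padded).\<close>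
definition scheme_size_le ::
  "'a set \<Rightarrow> 'a set set \<Rightarrow> ('a set \<times> 'a set \<Rightarrow> ('a set \<times> 'a set) \<times> bool list) \<Rightarrow> nat \<Rightarrow> bool" where
  "scheme_size_le HV HE kappa s \<longleftrightarrow> (\<exists>k1 k2. k1 + k2 \<le> s \<and>
     (\<forall>X\<in>samples HV HE. card (fst (fst (kappa X)) \<union> snd (fst (kappa X))) \<le> k1
        \<and> length (snd (kappa X)) \<le> k2))"

definition has_scheme_of_size :: "'a set \<Rightarrow> 'a set set \<Rightarrow> nat \<Rightarrow> bool" where
  "has_scheme_of_size HV HE s \<longleftrightarrow>
     (\<exists>kappa rho. is_compression_scheme HV HE kappa rho \<and> scheme_size_le HV HE kappa s)"

end

theory Submission
  imports Defs
begin

text \<open>A sample whose positive part has at most t vertices is compressed to that positive part: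
  the intersection of all closed neighbourhoods containing it realizes the sample.  Otherwise
  fix a realizing neighbourhood B(c,1) and a degeneracy order.  As c has at most t earlier
  neighbours, some positive vertex x is not one of them; being in B(c,1), x is then c itself or a
  later neighbour of c, so c lies in the set of x and its earlier neighbours.  That set has at
  most t + 1 \<le> 2^n elements, where n = \<lceil>log 2 (t + 1)\<rceil>, so the subsample {x} and n bits
  identify c.  One further bit tells the decoder which case it is in.\<close>

lemma Suc_le_two_power_nat_ceiling_log:
  "t + 1 \<le> 2 ^ nat \<lceil>log 2 (real t + 1)\<rceil>"
proof -
  define n where "n = nat \<lceil>log 2 (real t + 1)\<rceil>"
  have "log 2 (real t + 1) \<le> real n"
    unfolding n_def by (simp add: real_nat_ceiling_ge)
  then have "2 powr log 2 (real t + 1) \<le> 2 powr real n"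
    by (intro powr_mono) auto
  then have "real (t + 1) \<le> real (2 ^ n)"
    by (simp add: powr_realpow)
  then show ?thesis
    unfolding n_def by linarith
qed

lemma inj_on_bitstrings_if_card_le:
  assumes "finite A" and "card A \<le> 2 ^ n"
  obtains f :: "'a \<Rightarrow> bool list"
  where "inj_on f A" and "\<And>a. a \<in> A \<Longrightarrow> length (f a) = n"
proof -
  have "card {bs :: bool list. length bs = n} = 2 ^ n"
    using card_lists_length_eq[of "UNIV :: bool set" n] by simp
  then obtain f where "inj_on f A" "f ` A \<subseteq> {bs :: bool list. length bs = n}"
    using card_le_inj[OF assms(1) finite_lists_length_eq[of "UNIV :: bool set" n]] assms(2)
    by auto
  then show thesis
    using that by blast
qed

lemma realizes_Inter_edges:
  assumes "(P, M) \<in> samples HV HE"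
  shows "realizes (HV \<inter> \<Inter>{B \<in> HE. P \<subseteq> B}) (P, M)"
  using assms unfolding samples_def realizes_def by auto

lemma has_scheme_of_size_if_decoder:
  fixes rho :: "('a set \<times> 'a set) \<times> bool list \<Rightarrow> 'a set"
  assumes rho_subset: "\<And>Y b. rho (Y, b) \<subseteq> HV"
    and compressible: "\<And>X. X \<in> samples HV HE \<Longrightarrow> \<exists>Y b. is_subsample HV HE Y X
        \<and> card (fst Y \<union> snd Y) \<le> k1 \<and> length b \<le> k2 \<and> realizes (rho (Y, b)) X"
    and "k1 + k2 \<le> s"
  shows "has_scheme_of_size HV HE s"
proof -
  have "\<forall>X\<in>samples HV HE. \<exists>Yb. is_subsample HV HE (fst Yb) X
      \<and> card (fst (fst Yb) \<union> snd (fst Yb)) \<le> k1 \<and> length (snd Yb) \<le> k2 \<and> realizes (rho Yb) X"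
    using compressible by fastforce
  from bchoice[OF this] obtain kappa where kappa: "\<forall>X\<in>samples HV HE.
      is_subsample HV HE (fst (kappa X)) X \<and> card (fst (fst (kappa X)) \<union> snd (fst (kappa X))) \<le> k1
      \<and> length (snd (kappa X)) \<le> k2 \<and> realizes (rho (kappa X)) X"
    by blast
  have "is_compression_scheme HV HE kappa rho"
    unfolding is_compression_scheme_def using rho_subset kappa by blast
  moreover have "scheme_size_le HV HE kappa s"
    unfolding scheme_size_le_def using kappa \<open>k1 + k2 \<le> s\<close> by blast
  ultimately show ?thesis
    unfolding has_scheme_of_size_def by blast
qed

text \<open>A sample is compressed either to its positive part (flag bit False) or to a single
  positive vertex x together with the n-bit code, within G x, of a realizing centre c
  (flag bit True).\<close>

lemma has_scheme_of_size_by_pointers: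
  fixes N :: "'c \<Rightarrow> 'a set" and G :: "'a \<Rightarrow> 'c set"
  assumes "t \<ge> 1"
    and G_finite: "\<And>x. x \<in> HV \<Longrightarrow> finite (G x)"
    and G_card: "\<And>x. x \<in> HV \<Longrightarrow> card (G x) \<le> 2 ^ n"
    and pointer: "\<And>P c. c \<in> C \<Longrightarrow> P \<subseteq> HV \<Longrightarrow> P \<subseteq> N c \<Longrightarrow> t < card P \<Longrightarrow> \<exists>x\<in>P. c \<in> G x"
  shows "has_scheme_of_size HV (N ` C) (t + n + 1)"
proof -
  have "\<forall>x\<in>HV. \<exists>f :: 'c \<Rightarrow> bool list. inj_on f (G x) \<and> (\<forall>c\<in>G x. length (f c) = n)"
    by (metis G_finite G_card inj_on_bitstrings_if_card_le)
  from bchoice[OF this] obtain code :: "'a \<Rightarrow> 'c \<Rightarrow> bool list"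
    where code: "\<forall>x\<in>HV. inj_on (code x) (G x) \<and> (\<forall>c\<in>G x. length (code x c) = n)"
    by blast
  define rho where "rho Yb = (if snd Yb \<noteq> [] \<and> hd (snd Yb)
      then let x = SOME x. x \<in> fst (fst Yb) in HV \<inter> N (the_inv_into (G x) (code x) (tl (snd Yb)))
      else HV \<inter> \<Inter>{B \<in> N ` C. fst (fst Yb) \<subseteq> B})"
    for Yb :: "('a set \<times> 'a set) \<times> bool list"
  show ?thesis
  proof (rule has_scheme_of_size_if_decoder)
    show "rho (Y, b) \<subseteq> HV" for Y b
      unfolding rho_def by (auto simp: Let_def)
  next
    fix X assume X: "X \<in> samples HV (N ` C)"
    obtain P M where PM: "X = (P, M)" by force
    from X obtain c where c: "c \<in> C" "P \<subseteq> N c" "M \<inter> N c = {}" and "P \<subseteq> HV"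
      unfolding PM samples_def by auto
    show "\<exists>Y b. is_subsample HV (N ` C) Y X \<and> card (fst Y \<union> snd Y) \<le> t
        \<and> length b \<le> n + 1 \<and> realizes (rho (Y, b)) X"
    proof (cases "card P \<le> t")
      case True
      have "is_subsample HV (N ` C) (P, {}) X"
        unfolding is_subsample_def samples_def PM using \<open>P \<subseteq> HV\<close> c by auto
      moreover have "realizes (rho ((P, {}), [False])) X"
        unfolding rho_def PM using realizes_Inter_edges X PM by auto
      ultimately show ?thesis
        using True by (intro exI[of _ "(P, {})"] exI[of _ "[False]"]) simp
    next
      case False
      with pointer[OF c(1) \<open>P \<subseteq> HV\<close> c(2)] obtain x where "x \<in> P" "c \<in> G x"
        by auto
      with \<open>P \<subseteq> HV\<close> have x: "x \<in> HV" by auto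
      have "the_inv_into (G x) (code x) (code x c) = c"
        using code x \<open>c \<in> G x\<close> by (simp add: the_inv_into_f_f)
      then have "rho (({x}, {}), True # code x c) = HV \<inter> N c"
        unfolding rho_def by (simp add: Let_def)
      moreover have "realizes (HV \<inter> N c) X"
        unfolding realizes_def PM using c \<open>P \<subseteq> HV\<close> by auto
      moreover have "is_subsample HV (N ` C) ({x}, {}) X"
        unfolding is_subsample_def samples_def PM using x \<open>x \<in> P\<close> c by auto
      moreover have "length (True # code x c) \<le> n + 1"
        using code x \<open>c \<in> G x\<close> by simp
      ultimately show ?thesis
        using \<open>t \<ge> 1\<close> by (intro exI[of _ "({x}, {})"] exI[of _ "True # code x c"]) simp
    qed
  qed simp
qed

definition back_nbrs :: "'a set \<Rightarrow> ('a \<Rightarrow> 'a \<Rightarrow> bool) \<Rightarrow> 'a rel \<Rightarrow> 'a \<Rightarrow> 'a set" where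
  "back_nbrs V E r v = {u \<in> V. E u v \<and> (u, v) \<in> r}"

definition back_closed_nbhd :: "'a set \<Rightarrow> ('a \<Rightarrow> 'a \<Rightarrow> bool) \<Rightarrow> 'a rel \<Rightarrow> 'a \<Rightarrow> 'a set" where
  "back_closed_nbhd V E r v = insert v (back_nbrs V E r v)"

lemma finite_back_closed_nbhd: "finite V \<Longrightarrow> finite (back_closed_nbhd V E r v)"
  unfolding back_closed_nbhd_def back_nbrs_def by simp

lemma card_back_closed_nbhd_le:
  assumes "finite V" and "card (back_nbrs V E r v) \<le> t"
  shows "card (back_closed_nbhd V E r v) \<le> t + 1"
proof -
  have "finite (back_nbrs V E r v)"
    using \<open>finite V\<close> unfolding back_nbrs_def by simp
  then show ?thesis
    using assms(2) unfolding back_closed_nbhd_def by (simp add: card_insert_if)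
qed

lemma subset_back_nbrs_if_not_pointing:
  assumes "finite_graph V E" and "total_on V r"
    and "c \<in> V" and "P \<subseteq> closed_nbhd V E c"
    and not_pointing: "\<And>x. x \<in> P \<Longrightarrow> c \<notin> back_closed_nbhd V E r x"
  shows "P \<subseteq> back_nbrs V E r c"
proof
  fix x assume "x \<in> P"
  with not_pointing have "x \<noteq> c"
    unfolding back_closed_nbhd_def by blast
  with \<open>x \<in> P\<close> assms(4) have "E c x" and "x \<in> V"
    unfolding closed_nbhd_def by auto
  with not_pointing[OF \<open>x \<in> P\<close>] \<open>c \<in> V\<close> have "(c, x) \<notin> r"
    unfolding back_closed_nbhd_def back_nbrs_def by auto
  with \<open>total_on V r\<close> \<open>x \<noteq> c\<close> \<open>x \<in> V\<close> \<open>c \<in> V\<close> have "(x, c) \<in> r"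
    unfolding total_on_def by blast
  moreover have "E x c"
    using \<open>finite_graph V E\<close> \<open>E c x\<close> unfolding finite_graph_def by blast
  ultimately show "x \<in> back_nbrs V E r c"
    unfolding back_nbrs_def using \<open>x \<in> V\<close> by blast
qed

lemma ex_pointing_if_card_gt_back_degree:
  assumes "finite_graph V E" and "total_on V r"
    and "c \<in> V" and "P \<subseteq> closed_nbhd V E c"
    and "card (back_nbrs V E r c) < card P"
  shows "\<exists>x\<in>P. c \<in> back_closed_nbhd V E r x"
proof (rule ccontr)
  assume "\<not> ?thesis"
  then have "P \<subseteq> back_nbrs V E r c"
    using subset_back_nbrs_if_not_pointing[OF assms(1-4)] by blast
  moreover have "finite (back_nbrs V E r c)"
    using \<open>finite_graph V E\<close> unfolding finite_graph_def back_nbrs_def by simp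
  ultimately show False
    using card_mono assms(5) by (metis not_le)
qed

theorem theorem1p5:
  fixes V :: "'a set" and E :: "'a \<Rightarrow> 'a \<Rightarrow> bool" and t :: nat
  assumes "t \<ge> 1"
    and "finite_graph V E"
    and "degeneracy_le V E t"
  shows "has_scheme_of_size V (closed_nbhd_edges V E)
           (t + nat (ceiling (log 2 (real t + 1))) + 1)"
proof -
  obtain r where "total_on V r" and back_deg: "\<And>v. v \<in> V \<Longrightarrow> card (back_nbrs V E r v) \<le> t"
    using assms(3) unfolding degeneracy_le_def strict_linear_order_on_def back_nbrs_def by blast
  have "finite V"
    using assms(2) unfolding finite_graph_def by blast
  show ?thesis
    unfolding closed_nbhd_edges_def
  proof (rule has_scheme_of_size_by_pointers[where G = "back_closed_nbhd V E r"])
    show "finite (back_closed_nbhd V E r x)" for x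
      using \<open>finite V\<close> by (rule finite_back_closed_nbhd)
    show "card (back_closed_nbhd V E r x) \<le> 2 ^ nat \<lceil>log 2 (real t + 1)\<rceil>" if "x \<in> V" for x
      using card_back_closed_nbhd_le[OF \<open>finite V\<close> back_deg[OF that]]
        Suc_le_two_power_nat_ceiling_log[of t] by linarith
    show "\<exists>x\<in>P. c \<in> back_closed_nbhd V E r x"
      if "c \<in> V" "P \<subseteq> V" "P \<subseteq> closed_nbhd V E c" "t < card P" for P c
      using ex_pointing_if_card_gt_back_degree[OF assms(2) \<open>total_on V r\<close>] back_deg that
      by (meson le_less_trans)
  qed (rule assms(1))
qed

end
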